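(* Consider the graphs $G_j(t),F_j(t)$ ($j\ge1$, $t\ge0$) constructed from an edge-arrival process, and graphs $G'_j(t),F'_j(t)$ constructed in the same way from a second edge-arrival process which contains all arrivals of the first (and possibly others). Then $G_j(t)\subseteq G'_j(t)$ for all $j\ge1$ and $t\ge0$. Moreover, any edge $e$ present in both arrival processes which is contained in $F'_1(t)\cup\dots\cup F'_j(t)$ is also contained in $F_1(t)\cup\dots\cup F_j(t)$.
   Context: An edge-arrival process on the vertex set $[n]$ is a collection of (labelled, possibly parallel) edges between distinct vertices, each with an arrival time in $(0,\infty)$, arrival times distinct, with finitely many arrivals in each bounded time interval. From it one constructs: $G_1(t)$, the multigraph of edges arrived by time $t$; recursively, $F_k(t)$, the subgraph of $G_k(t)$ of those edges which at their arrival time $s\le t$ joined two different components of $G_k(s)$, and $G_{k+1}(t):=G_k(t)\setminus F_k(t)$. Inclusion of graphs means inclusion of edge sets (vertex set $[n]$ fixed). *)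

theory Defs
  imports Complex_Main
begin

text \<open>The functions ends and arr are global on the label type, so a second process
  E' with E \<subseteq> E' contains all arrivals of the first (same endpoints, same times).\<close>

definition arrival_process :: "nat \<Rightarrow> ('e \<Rightarrow> nat \<times> nat) \<Rightarrow> ('e \<Rightarrow> real) \<Rightarrow> 'e set \<Rightarrow> bool" where
  "arrival_process n ends arr E \<longleftrightarrow>
     (\<forall>e\<in>E. fst (ends e) \<in> {1..n} \<and> snd (ends e) \<in> {1..n} \<and> fst (ends e) \<noteq> snd (ends e)) \<and>
     (\<forall>e\<in>E. arr e > 0) \<and>
     inj_on arr E \<and>
     (\<forall>t::real. finite {e\<in>E. arr e \<le> t})"

definition adj :: "('e \<Rightarrow> nat \<times> nat) \<Rightarrow> 'e set \<Rightarrow> (nat \<times> nat) set" where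
  "adj ends A = {(u, v). \<exists>e\<in>A. ends e = (u, v) \<or> ends e = (v, u)}"

definition connected_in :: "('e \<Rightarrow> nat \<times> nat) \<Rightarrow> 'e set \<Rightarrow> nat \<Rightarrow> nat \<Rightarrow> bool" where
  "connected_in ends A u v \<longleftrightarrow> (u, v) \<in> (adj ends A)\<^sup>*"

text \<open>Given a time-indexed graph g, the forest part: edges of g t which at their
  arrival time s joined two different components of g s (i.e. of g s before e arrived,
  the edges of g s with arrival time < s).\<close>
definition forest_part :: "('e \<Rightarrow> nat \<times> nat) \<Rightarrow> ('e \<Rightarrow> real) \<Rightarrow> (real \<Rightarrow> 'e set) \<Rightarrow> real \<Rightarrow> 'e set" where
  "forest_part ends arr g t =
     {e \<in> g t. \<not> connected_in ends {f \<in> g (arr e). arr f < arr e} (fst (ends e)) (snd (ends e))}"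

text \<open>Gidx k = G_(k+1) (0-based internal indexing).\<close>
primrec Gidx :: "('e \<Rightarrow> nat \<times> nat) \<Rightarrow> ('e \<Rightarrow> real) \<Rightarrow> 'e set \<Rightarrow> nat \<Rightarrow> real \<Rightarrow> 'e set" where
  "Gidx ends arr E 0 = (\<lambda>t. {e \<in> E. arr e \<le> t})"
| "Gidx ends arr E (Suc k) =
     (\<lambda>t. Gidx ends arr E k t - forest_part ends arr (Gidx ends arr E k) t)"

definition Gj :: "('e \<Rightarrow> nat \<times> nat) \<Rightarrow> ('e \<Rightarrow> real) \<Rightarrow> 'e set \<Rightarrow> nat \<Rightarrow> real \<Rightarrow> 'e set" where
  "Gj ends arr E j t = Gidx ends arr E (j - 1) t"

definition Fj :: "('e \<Rightarrow> nat \<times> nat) \<Rightarrow> ('e \<Rightarrow> real) \<Rightarrow> 'e set \<Rightarrow> nat \<Rightarrow> real \<Rightarrow> 'e set" where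
  "Fj ends arr E j t = forest_part ends arr (Gidx ends arr E (j - 1)) t"

end

theory Submission
  imports Defs
begin

text \<open>Whether an edge survives from G_k into G_(k+1) is decided at its arrival time and never
  changes afterwards, so G_(k+1)(t) is the time-t truncation of a fixed edge set, the k-th layer.
  Layers grow with the arrival process, since an edge closing a cycle among earlier edges of a
  layer still does so when that layer has more edges.  The forests F_1(t), ..., F_j(t) together
  consist of the arrived edges outside the j-th layer, and an edge outside the j-th layer of the
  larger process is outside that of the smaller one.\<close>

primrec layer :: "('e \<Rightarrow> nat \<times> nat) \<Rightarrow> ('e \<Rightarrow> real) \<Rightarrow> 'e set \<Rightarrow> nat \<Rightarrow> 'e set" where
  "layer ends arr E 0 = E"
| "layer ends arr E (Suc k) = {e \<in> layer ends arr E k.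
     connected_in ends {f \<in> layer ends arr E k. arr f < arr e} (fst (ends e)) (snd (ends e))}"

lemma Gidx_eq_layer: "Gidx ends arr E k t = {e \<in> layer ends arr E k. arr e \<le> t}"
proof (induction k arbitrary: t)
  case 0
  then show ?case by simp
next
  case (Suc k)
  have "{f \<in> Gidx ends arr E k (arr e). arr f < arr e} = {f \<in> layer ends arr E k. arr f < arr e}"
    for e using Suc.IH by auto
  then show ?case
    unfolding Gidx.simps forest_part_def using Suc.IH by auto
qed

lemma Fj_Suc_eq_layer_diff:
  "Fj ends arr E (Suc k) t = {e \<in> layer ends arr E k - layer ends arr E (Suc k). arr e \<le> t}"
proof -
  have "Fj ends arr E (Suc k) t = Gidx ends arr E k t - Gidx ends arr E (Suc k) t"
    unfolding Fj_def by (auto simp: forest_part_def)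
  then show ?thesis
    unfolding Gidx_eq_layer by auto
qed

lemma layer_subset: "layer ends arr E k \<subseteq> E"
  by (induction k) auto

lemma UN_Fj_eq_diff_layer:
  "(\<Union>i\<in>{1..j}. Fj ends arr E i t) = {e \<in> E - layer ends arr E j. arr e \<le> t}"
proof (induction j)
  case 0
  then show ?case by simp
next
  case (Suc j)
  have "(\<Union>i\<in>{1..Suc j}. Fj ends arr E i t)
      = {e \<in> E - layer ends arr E j. arr e \<le> t} \<union> Fj ends arr E (Suc j) t"
    using Suc.IH by (auto simp: atLeastAtMostSuc_conv)
  also have "\<dots> = {e \<in> E - layer ends arr E (Suc j). arr e \<le> t}"
    unfolding Fj_Suc_eq_layer_diff using layer_subset[of ends arr E j] by auto
  finally show ?case .
qed

lemma connected_in_mono: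
  assumes "A \<subseteq> B" and "connected_in ends A u v"
  shows "connected_in ends B u v"
proof -
  have "adj ends A \<subseteq> adj ends B"
    using assms(1) unfolding adj_def by auto
  then show ?thesis
    using assms(2) rtrancl_mono unfolding connected_in_def by blast
qed

lemma layer_mono:
  assumes "E \<subseteq> E'"
  shows "layer ends arr E k \<subseteq> layer ends arr E' k"
proof (induction k)
  case 0
  then show ?case using assms by simp
next
  case (Suc k)
  have "{f \<in> layer ends arr E k. arr f < arr e} \<subseteq> {f \<in> layer ends arr E' k. arr f < arr e}" for e
    using Suc.IH by auto
  then show ?case
    using Suc.IH connected_in_mono by fastforce
qed

theorem lemma5p7:
  fixes n :: nat and ends :: "'e \<Rightarrow> nat \<times> nat" and arr :: "'e \<Rightarrow> real"
    and E E' :: "'e set"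
  assumes "arrival_process n ends arr E"
    and "arrival_process n ends arr E'"
    and "E \<subseteq> E'"
  shows "(\<forall>j\<ge>1. \<forall>t\<ge>0. Gj ends arr E j t \<subseteq> Gj ends arr E' j t) \<and>
         (\<forall>j\<ge>1. \<forall>t\<ge>0. \<forall>e\<in>E \<inter> E'.
            e \<in> (\<Union>i\<in>{1..j}. Fj ends arr E' i t) \<longrightarrow> e \<in> (\<Union>i\<in>{1..j}. Fj ends arr E i t))"
proof (intro conjI allI impI ballI)
  fix j :: nat and t :: real
  show "Gj ends arr E j t \<subseteq> Gj ends arr E' j t"
    unfolding Gj_def Gidx_eq_layer using layer_mono[OF assms(3)] by blast
next
  fix j :: nat and t :: real and e
  assume "e \<in> E \<inter> E'" and "e \<in> (\<Union>i\<in>{1..j}. Fj ends arr E' i t)"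
  then show "e \<in> (\<Union>i\<in>{1..j}. Fj ends arr E i t)"
    unfolding UN_Fj_eq_diff_layer using layer_mono[OF assms(3), of ends arr j] by blast
qed

end
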